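(* Let $d, k_1, \ldots, k_d$ be positive integers, $n=k_1+\cdots+k_d$, and let $A$ be the $n\times n$ block matrix \[ A=\begin{pmatrix} A_1 & a_{12}\mathbf{1} & \cdots & a_{1d}\mathbf{1} \\ a_{21}\mathbf{1} & A_2 & \cdots & a_{2d}\mathbf{1} \\ \vdots & \vdots & \ddots & \vdots \\ a_{d1}\mathbf{1} & a_{d2}\mathbf{1} & \cdots & A_d \end{pmatrix}, \] where each $A_i$ is a normal, $r_{A_i}$-row regular complex $k_i\times k_i$ matrix and each $a_{ij}\mathbf{1}$ ($i\ne j$) is the $k_i\times k_j$ matrix all of whose entries equal $a_{ij}\in\mathbb{C}$. Let $\overline{A}$ be the $d\times d$ matrix with diagonal entries $\overline{A}_{ii}=r_{A_i}$ and off-diagonal entries $\overline{A}_{ij}=a_{ij}k_j$ for $i\neq j$. For each $i$, let $r_{A_i}=\lambda_1^{A_i},\lambda_2^{A_i},\ldots,\lambda_{k_i}^{A_i}$ be the eigenvalues of $A_i$ listed with multiplicity (so the multiset $\{\lambda_2^{A_i},\dots,\lambda_{k_i}^{A_i}\}$ is the spectrum of $A_i$ with one copy of $r_{A_i}$ removed). Then the characteristic polynomials satisfy \[ p_{A}(t)= p_{\overline{A}}(t) \prod_{\substack{1 \leq i \leq d, \\ 2 \leq j \leq k_i}} (t-\lambda_{j}^{A_i}), \] equivalently $p_A(t)\prod_{i=1}^d (t-r_{A_i}) = p_{\overline A}(t)\prod_{i=1}^d p_{A_i}(t)$.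
   Context: A complex square matrix $M$ is normal if $MM^*=M^*M$ ($M^*$ the conjugate transpose), and $r_M$-row regular if every row of $M$ sums to $r_M$ (for normal row regular $M$, $r_M$ is an eigenvalue of $M$). $p_M(t)=\det(tI-M)$ denotes the characteristic polynomial. *)

theory Defs
  imports "Jordan_Normal_Form.Schur_Decomposition"
begin

definition normal_mat :: "complex mat \<Rightarrow> bool" where
  "normal_mat M \<longleftrightarrow> M \<in> carrier_mat (dim_row M) (dim_row M) \<and>
     M * mat_adjoint M = mat_adjoint M * M"

definition row_regular :: "complex mat \<Rightarrow> complex \<Rightarrow> bool" where
  "row_regular M r \<longleftrightarrow> (\<forall>p < dim_row M. (\<Sum>q < dim_col M. M $$ (p, q)) = r)"

text \<open>Offset of block i: k_0 + ... + k_(i-1) (blocks indexed from 0).\<close>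
definition blk_off :: "(nat \<Rightarrow> nat) \<Rightarrow> nat \<Rightarrow> nat" where
  "blk_off k i = (\<Sum>l < i. k l)"

definition blk_of :: "(nat \<Rightarrow> nat) \<Rightarrow> nat \<Rightarrow> nat" where
  "blk_of k p = (LEAST i. p < blk_off k (Suc i))"

definition block_const_mat ::
  "nat \<Rightarrow> (nat \<Rightarrow> nat) \<Rightarrow> (nat \<Rightarrow> complex mat) \<Rightarrow> (nat \<Rightarrow> nat \<Rightarrow> complex) \<Rightarrow> complex mat" where
  "block_const_mat d k As a = mat (blk_off k d) (blk_off k d) (\<lambda>(p, q).
     (let i = blk_of k p; j = blk_of k q in
      if i = j then As i $$ (p - blk_off k i, q - blk_off k i) else a i j))"

definition quotient_mat ::
  "nat \<Rightarrow> (nat \<Rightarrow> nat) \<Rightarrow> (nat \<Rightarrow> complex) \<Rightarrow> (nat \<Rightarrow> nat \<Rightarrow> complex) \<Rightarrow> complex mat" where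
  "quotient_mat d k r a = mat d d (\<lambda>(i, j). if i = j then r i else a i j * of_nat (k j))"

end

theory Submission
  imports Defs
begin

text \<open>Over any commutative ring, let M consist of diagonal blocks B_i of size k_i with
  constant row sums s_i and of constant off-diagonal blocks c_ij. Adding the columns of each
  block to its first column and then subtracting the first row of each block from the other
  rows of that block changes M by two unitriangular factors. Afterwards every non-first row of
  block i vanishes outside the non-first columns of block i, where it reads
  B_i(a+1,b+1) - B_i(0,b+1), while the first rows and columns of the blocks carry the quotient
  matrix (s_i on the diagonal, k_j c_ij off it). So det M is det of the quotient times the
  product of the determinants of these deflated blocks, and the case of a single block gives
  det B = s det (deflated B). Applied to tI - A over the polynomial ring this is the theorem.\<close>

section \<open>Determinants with unit rows\<close>

lemma det_unit_lower_triangular: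
  fixes A :: "'a::comm_ring_1 mat"
  assumes A: "A \<in> carrier_mat n n"
    and upper_zero: "\<And>i j. i < j \<Longrightarrow> j < n \<Longrightarrow> A $$ (i, j) = 0"
    and diag_one: "\<And>i. i < n \<Longrightarrow> A $$ (i, i) = 1"
  shows "det A = 1"
proof -
  have "diag_mat A = replicate n 1"
    using A diag_one by (intro nth_equalityI) (auto simp: diag_mat_def)
  then show ?thesis
    using det_lower_triangular[OF upper_zero A] by simp
qed

lemma det_eq_det_mat_delete_unit_row:
  fixes N :: "'a::comm_ring_1 mat"
  assumes N: "N \<in> carrier_mat n n" and x: "x < n"
    and unit_row: "\<And>q. q < n \<Longrightarrow> N $$ (x, q) = of_bool (x = q)"
  shows "det N = det (mat_delete N x x)"
proof -
  have "det N = (\<Sum>q<n. N $$ (x, q) * cofactor N x q)"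
    by (rule laplace_expansion_row[OF N x])
  also have "\<dots> = (\<Sum>q<n. if q = x then cofactor N x q else 0)"
    by (rule sum.cong) (auto simp: unit_row)
  also have "\<dots> = cofactor N x x"
    using x by simp
  also have "\<dots> = det (mat_delete N x x)"
    by (simp add: cofactor_def)
  finally show ?thesis .
qed

lemma strict_mono_lessThan_gap:
  fixes g :: "nat \<Rightarrow> nat"
  assumes incr: "\<And>i j. i < j \<Longrightarrow> j < m \<Longrightarrow> g i < g j"
  shows "i \<le> j \<Longrightarrow> j < m \<Longrightarrow> g i + (j - i) \<le> g j"
proof (induction j)
  case (Suc j)
  show ?case
  proof (cases "i = Suc j")
    case False
    with Suc.prems have "g i + (j - i) \<le> g j" and "g j < g (Suc j)"
      using Suc.IH incr by simp_all
    with False Suc.prems show ?thesis by simp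
  qed simp
qed simp

lemma strict_mono_lessThan_self_eq_id:
  fixes g :: "nat \<Rightarrow> nat"
  assumes incr: "\<And>i j. i < j \<Longrightarrow> j < m \<Longrightarrow> g i < g j"
    and bounded: "\<And>i. i < m \<Longrightarrow> g i < m" and i: "i < m"
  shows "g i = i"
proof -
  have "g 0 + i \<le> g i" and "g i + (m - 1 - i) \<le> g (m - 1)"
    using strict_mono_lessThan_gap[of m g 0 i, OF incr] strict_mono_lessThan_gap[of m g i "m - 1", OF incr] i
    by simp_all
  with bounded[of "m - 1"] i show ?thesis by linarith
qed

lemma principal_submatrix_full:
  fixes N :: "'a mat"
  assumes N: "N \<in> carrier_mat n n"
    and incr: "\<And>i j. i < j \<Longrightarrow> j < m \<Longrightarrow> g i < g j"
    and bounded: "\<And>i. i < m \<Longrightarrow> g i < n"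
    and onto: "{..<n} \<subseteq> g ` {..<m}"
  shows "mat m m (\<lambda>(i, j). N $$ (g i, g j)) = N"
proof -
  have inj: "inj_on g {..<m}"
    using incr by (metis inj_on_def lessThan_iff linorder_neqE_nat order_less_irrefl)
  have "n \<le> m"
    using card_mono[OF _ onto] card_image_le[of "{..<m}" g] by simp
  moreover have "m \<le> n"
    using card_inj_on_le[OF inj, of "{..<n}"] bounded by auto
  ultimately have "g i = i" if "i < m" for i
    using strict_mono_lessThan_self_eq_id[of m g i] incr bounded that by simp
  with N \<open>m \<le> n\<close> \<open>n \<le> m\<close> show ?thesis
    by (auto intro!: eq_matI)
qed

lemma det_eq_det_principal_submatrix:
  fixes N :: "'a::comm_ring_1 mat"
  assumes "N \<in> carrier_mat n n"
    and "\<And>i j. i < j \<Longrightarrow> j < m \<Longrightarrow> g i < g j"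
    and "\<And>i. i < m \<Longrightarrow> g i < n"
    and "\<And>p q. p < n \<Longrightarrow> q < n \<Longrightarrow> p \<notin> g ` {..<m} \<Longrightarrow> N $$ (p, q) = of_bool (p = q)"
  shows "det N = det (mat m m (\<lambda>(i, j). N $$ (g i, g j)))"
  using assms
proof (induction n arbitrary: N g)
  case 0
  then have "m = 0" by blast
  with 0 show ?case by simp
next
  case (Suc n)
  note N = Suc.prems(1) and incr = Suc.prems(2) and bounded = Suc.prems(3)
    and unit_rows = Suc.prems(4)
  show ?case
  proof (cases "{..<Suc n} \<subseteq> g ` {..<m}")
    case True
    then show ?thesis
      using principal_submatrix_full[OF N incr bounded] by simp
  next
    case False
    then obtain x where x: "x < Suc n" "x \<notin> g ` {..<m}" by auto
    define N' where "N' = mat_delete N x x"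
    define g' where "g' = delete_index x \<circ> g"
    have gx: "g i \<noteq> x" if "i < m" for i using x that by auto
    have g_reinsert: "insert_index x (g' i) = g i" if "i < m" for i
      using insert_delete_index[OF gx[OF that]] by (simp add: g'_def)
    have N': "N' \<in> carrier_mat n n"
      using mat_delete_carrier[OF N] by (simp add: N'_def)
    have N'_index: "N' $$ (a, b) = N $$ (insert_index x a, insert_index x b)" if "a < n" "b < n" for a b
      using mat_delete_index[OF N x(1) x(1) that] by (simp add: N'_def)
    have g'_incr: "g' i < g' j" if "i < j" "j < m" for i j
      using incr[OF that] gx[of i] gx[of j] that by (auto simp: g'_def delete_index_def)
    have g'_bounded: "g' i < n" if "i < m" for i
      using bounded[OF that] gx[OF that] x(1) by (auto simp: g'_def delete_index_def)
    have "det N = det N'"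
      unfolding N'_def using x unit_rows[of x] by (intro det_eq_det_mat_delete_unit_row[OF N x(1)]) auto
    also have "det N' = det (mat m m (\<lambda>(i, j). N' $$ (g' i, g' j)))"
    proof (rule Suc.IH[OF N' g'_incr g'_bounded])
      show "N' $$ (a, b) = of_bool (a = b)" if "a < n" "b < n" "a \<notin> g' ` {..<m}" for a b
      proof -
        have "insert_index x a \<notin> g ` {..<m}"
        proof
          assume "insert_index x a \<in> g ` {..<m}"
          then obtain i where "i < m" "g i = insert_index x a" by auto
          then have "g' i = a" by (simp add: g'_def)
          with \<open>i < m\<close> that(3) show False by auto
        qed
        then show ?thesis
          using N'_index[OF that(1,2)] unit_rows[of "insert_index x a" "insert_index x b"] that
          by (auto simp: insert_index_def)
      qed
    qed
    also have "mat m m (\<lambda>(i, j). N' $$ (g' i, g' j)) = mat m m (\<lambda>(i, j). N $$ (g i, g j))"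
      using N'_index[OF g'_bounded g'_bounded] g_reinsert by (auto intro!: eq_matI)
    finally show ?thesis .
  qed
qed

definition restrict_rows :: "nat set \<Rightarrow> 'a::comm_ring_1 mat \<Rightarrow> 'a mat" where
  "restrict_rows S N = mat (dim_row N) (dim_row N) (\<lambda>(p, q). if p \<in> S then N $$ (p, q) else of_bool (p = q))"

lemma restrict_rows_carrier [simp]: "N \<in> carrier_mat n n \<Longrightarrow> restrict_rows S N \<in> carrier_mat n n"
  by (simp add: restrict_rows_def)

lemma restrict_rows_index:
  "N \<in> carrier_mat n n \<Longrightarrow> p < n \<Longrightarrow> q < n \<Longrightarrow>
    restrict_rows S N $$ (p, q) = (if p \<in> S then N $$ (p, q) else of_bool (p = q))"
  by (simp add: restrict_rows_def)

lemma det_split_invariant_rows: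
  fixes N :: "'a::comm_ring_1 mat"
  assumes N: "N \<in> carrier_mat n n"
    and invariant: "\<And>p q. p < n \<Longrightarrow> q < n \<Longrightarrow> p \<in> S \<Longrightarrow> q \<notin> S \<Longrightarrow> N $$ (p, q) = 0"
  shows "det N = det (restrict_rows S N) * det (restrict_rows (- S) N)"
proof -
  have "restrict_rows S N * restrict_rows (- S) N = N"
  proof (rule eq_matI)
    fix p q assume "p < dim_row N" "q < dim_col N"
    with N have pq: "p < n" "q < n" by auto
    have "(restrict_rows S N * restrict_rows (- S) N) $$ (p, q) =
        (\<Sum>x<n. restrict_rows S N $$ (p, x) * restrict_rows (- S) N $$ (x, q))"
      using N pq by (simp add: scalar_prod_def atLeast0LessThan restrict_rows_def)
    also have "\<dots> = (\<Sum>x<n. if x = (if p \<in> S then q else p) then N $$ (p, q) else 0)"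
      using N pq invariant by (intro sum.cong) (auto simp: restrict_rows_index)
    also have "\<dots> = N $$ (p, q)"
      using pq by simp
    finally show "(restrict_rows S N * restrict_rows (- S) N) $$ (p, q) = N $$ (p, q)" .
  qed (use N in \<open>auto simp: restrict_rows_def\<close>)
  then have "det N = det (restrict_rows S N * restrict_rows (- S) N)"
    by simp
  also have "\<dots> = det (restrict_rows S N) * det (restrict_rows (- S) N)"
    by (rule det_mult[OF restrict_rows_carrier[OF N] restrict_rows_carrier[OF N]])
  finally show ?thesis .
qed

lemma det_prod_invariant_rows:
  fixes N :: "'a::comm_ring_1 mat" and C :: "nat \<Rightarrow> nat set"
  assumes N: "N \<in> carrier_mat n n"
    and invariant: "\<And>i p q. i < d \<Longrightarrow> p < n \<Longrightarrow> q < n \<Longrightarrow> p \<in> C i \<Longrightarrow> q \<notin> C i \<Longrightarrow> N $$ (p, q) = 0"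
    and disjoint: "\<And>i j. i < d \<Longrightarrow> j < d \<Longrightarrow> i \<noteq> j \<Longrightarrow> C i \<inter> C j = {}"
  shows "det N = (\<Prod>i<d. det (restrict_rows (C i) N)) * det (restrict_rows (- (\<Union>i<d. C i)) N)"
  using invariant disjoint
proof (induction d)
  case 0
  have "restrict_rows UNIV N = N"
    using N by (intro eq_matI) (auto simp: restrict_rows_def)
  then show ?case by simp
next
  case (Suc d)
  let ?U = "\<Union>i<d. C i"
  have IH: "det N = (\<Prod>i<d. det (restrict_rows (C i) N)) * det (restrict_rows (- ?U) N)"
  proof (rule Suc.IH)
    show "N $$ (p, q) = 0" if "i < d" "p < n" "q < n" "p \<in> C i" "q \<notin> C i" for i p q
      using Suc.prems(1)[of i p q] that by simp
  qed (use Suc.prems(2) in simp)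
  have outside: "p \<notin> C j" if "p \<in> C d" "j < d" for p j
    using Suc.prems(2)[of d j] that by auto
  have "det (restrict_rows (- ?U) N) =
      det (restrict_rows (C d) (restrict_rows (- ?U) N)) * det (restrict_rows (- C d) (restrict_rows (- ?U) N))"
  proof (rule det_split_invariant_rows)
    show "restrict_rows (- ?U) N $$ (p, q) = 0" if "p < n" "q < n" "p \<in> C d" "q \<notin> C d" for p q
      using N outside Suc.prems(1)[of d p q] that by (auto simp: restrict_rows_index)
  qed (use N in simp)
  also have "restrict_rows (C d) (restrict_rows (- ?U) N) = restrict_rows (C d) N"
    using N outside by (intro eq_matI) (auto simp: restrict_rows_def)
  also have "restrict_rows (- C d) (restrict_rows (- ?U) N) = restrict_rows (- (\<Union>i<Suc d. C i)) N"
    using N by (intro eq_matI) (auto simp: restrict_rows_def lessThan_Suc)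
  finally show ?case
    using IH by (simp add: mult.assoc)
qed

lemma det_restrict_rows_principal_submatrix:
  fixes N :: "'a::comm_ring_1 mat"
  assumes N: "N \<in> carrier_mat n n"
    and incr: "\<And>i j. i < j \<Longrightarrow> j < m \<Longrightarrow> g i < g j"
    and bounded: "\<And>i. i < m \<Longrightarrow> g i < n"
    and image: "\<And>i. i < m \<Longrightarrow> g i \<in> S" "\<And>p. p < n \<Longrightarrow> p \<in> S \<Longrightarrow> p \<in> g ` {..<m}"
  shows "det (restrict_rows S N) = det (mat m m (\<lambda>(i, j). N $$ (g i, g j)))"
proof -
  have "det (restrict_rows S N) = det (mat m m (\<lambda>(i, j). restrict_rows S N $$ (g i, g j)))"
    using N image(2) by (intro det_eq_det_principal_submatrix[OF _ incr bounded])
      (auto simp: restrict_rows_index)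
  also have "mat m m (\<lambda>(i, j). restrict_rows S N $$ (g i, g j)) = mat m m (\<lambda>(i, j). N $$ (g i, g j))"
    using N bounded image(1) by (intro eq_matI) (auto simp: restrict_rows_index)
  finally show ?thesis .
qed

section \<open>Block index arithmetic\<close>

lemma blk_off_Suc [simp]: "blk_off k (Suc i) = blk_off k i + k i"
  by (simp add: blk_off_def)

lemma blk_off_mono: "i \<le> j \<Longrightarrow> blk_off k i \<le> blk_off k j"
  unfolding blk_off_def by (rule sum_mono2) auto

lemma blk_off_add_le: "i < j \<Longrightarrow> blk_off k i + k i \<le> blk_off k j"
  using blk_off_mono[of "Suc i" j k] by simp

lemma blk_off_add_less: "i < d \<Longrightarrow> a < k i \<Longrightarrow> blk_off k i + a < blk_off k d"
  using blk_off_mono[of "Suc i" d k] by simp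

lemma blk_of_eq: "blk_off k i \<le> p \<Longrightarrow> p < blk_off k i + k i \<Longrightarrow> blk_of k p = i"
  unfolding blk_of_def
proof (rule Least_equality)
  show "i \<le> j" if "blk_off k i \<le> p" "p < blk_off k (Suc j)" for j
    using that blk_off_mono[of "Suc j" i k] by (cases "i \<le> j") auto
qed simp

lemma blk_of_off_add [simp]: "a < k i \<Longrightarrow> blk_of k (blk_off k i + a) = i"
  by (rule blk_of_eq) simp_all

lemma blk_of_bounds:
  assumes "p < blk_off k d"
  shows "blk_of k p < d" "blk_off k (blk_of k p) \<le> p" "p < blk_off k (blk_of k p) + k (blk_of k p)"
proof -
  have "\<exists>i<d. blk_off k i \<le> p \<and> p < blk_off k i + k i"
    using assms
  proof (induction d)
    case (Suc d)
    then show ?case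
      by (cases "p < blk_off k d") (auto intro: less_SucI)
  qed (simp add: blk_off_def)
  then obtain i where "i < d" "blk_off k i \<le> p" "p < blk_off k i + k i"
    by blast
  with blk_of_eq show "blk_of k p < d" "blk_off k (blk_of k p) \<le> p"
      "p < blk_off k (blk_of k p) + k (blk_of k p)"
    by simp_all
qed

lemma sum_over_block:
  fixes f :: "nat \<Rightarrow> 'a::comm_monoid_add"
  assumes "j < d"
  shows "(\<Sum>x<blk_off k d. if blk_of k x = j then f x else 0) = (\<Sum>a<k j. f (blk_off k j + a))"
proof -
  have "{x. x < blk_off k d \<and> blk_of k x = j} = (\<lambda>a. blk_off k j + a) ` {..<k j}"
  proof (intro equalityI subsetI)
    fix x assume "x \<in> {x. x < blk_off k d \<and> blk_of k x = j}"
    then have "x = blk_off k j + (x - blk_off k j)" "x - blk_off k j < k j"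
      using blk_of_bounds[of x k d] by auto
    then show "x \<in> (\<lambda>a. blk_off k j + a) ` {..<k j}"
      by blast
  qed (use blk_off_add_less[OF assms] in auto)
  then have "(\<Sum>x<blk_off k d. if blk_of k x = j then f x else 0) = sum f ((\<lambda>a. blk_off k j + a) ` {..<k j})"
    by (simp add: sum.If_cases Collect_conj_eq lessThan_def Int_commute)
  also have "\<dots> = (\<Sum>a<k j. f (blk_off k j + a))"
    by (simp add: sum.reindex)
  finally show ?thesis .
qed

section \<open>Block matrices with constant off-diagonal blocks\<close>

text \<open>Versions of block_const_mat and quotient_mat over an arbitrary commutative ring, needed
  for the polynomial matrices tI - A.\<close>

definition block_const_mat' ::
  "nat \<Rightarrow> (nat \<Rightarrow> nat) \<Rightarrow> (nat \<Rightarrow> 'a::comm_ring_1 mat) \<Rightarrow> (nat \<Rightarrow> nat \<Rightarrow> 'a) \<Rightarrow> 'a mat" where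
  "block_const_mat' d k B c = mat (blk_off k d) (blk_off k d) (\<lambda>(p, q).
     (let i = blk_of k p; j = blk_of k q in
      if i = j then B i $$ (p - blk_off k i, q - blk_off k i) else c i j))"

definition quotient_mat' ::
  "nat \<Rightarrow> (nat \<Rightarrow> nat) \<Rightarrow> (nat \<Rightarrow> 'a::comm_ring_1) \<Rightarrow> (nat \<Rightarrow> nat \<Rightarrow> 'a) \<Rightarrow> 'a mat" where
  "quotient_mat' d k s c = mat d d (\<lambda>(i, j). if i = j then s i else c i j * of_nat (k j))"

definition deflated_mat :: "'a::comm_ring_1 mat \<Rightarrow> 'a mat" where
  "deflated_mat B = mat (dim_row B - 1) (dim_row B - 1) (\<lambda>(a, b). B $$ (Suc a, Suc b) - B $$ (0, Suc b))"

locale row_regular_blocks =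
  fixes d :: nat and k :: "nat \<Rightarrow> nat" and B :: "nat \<Rightarrow> 'a::comm_ring_1 mat"
    and s :: "nat \<Rightarrow> 'a" and c :: "nat \<Rightarrow> nat \<Rightarrow> 'a"
  assumes k_pos: "i < d \<Longrightarrow> 0 < k i"
    and B_carrier: "i < d \<Longrightarrow> B i \<in> carrier_mat (k i) (k i)"
    and B_row_sum: "i < d \<Longrightarrow> p < k i \<Longrightarrow> (\<Sum>q<k i. B i $$ (p, q)) = s i"
begin

abbreviation "n \<equiv> blk_off k d"
abbreviation "M \<equiv> block_const_mat' d k B c"
abbreviation "blk \<equiv> blk_of k"
abbreviation "off \<equiv> blk_off k"
abbreviation head :: "nat \<Rightarrow> bool" where "head p \<equiv> off (blk p) = p"

lemma head_off: "i < d \<Longrightarrow> head (off i)"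
  using blk_of_off_add[of 0 k i] k_pos by simp

lemma off_less: "i < d \<Longrightarrow> off i < n"
  using blk_off_add_less[of i d 0 k] k_pos by simp

lemma M_carrier: "M \<in> carrier_mat n n"
  by (simp add: block_const_mat'_def)

lemma M_index:
  "p < n \<Longrightarrow> q < n \<Longrightarrow> M $$ (p, q) =
    (if blk p = blk q then B (blk p) $$ (p - off (blk p), q - off (blk p)) else c (blk p) (blk q))"
  by (simp add: block_const_mat'_def Let_def)

lemma M_block_row_sum:
  assumes p: "p < n" and j: "j < d"
  shows "(\<Sum>a<k j. M $$ (p, off j + a)) = (if blk p = j then s j else of_nat (k j) * c (blk p) j)"
proof (cases "blk p = j")
  case True
  have "p - off j < k j"
    using blk_of_bounds[OF p] True by simp
  then have "(\<Sum>a<k j. M $$ (p, off j + a)) = (\<Sum>a<k j. B j $$ (p - off j, a))"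
    using True p blk_off_add_less[OF j] by (intro sum.cong) (simp_all add: M_index)
  then show ?thesis
    using B_row_sum[OF j \<open>p - off j < k j\<close>] True by simp
next
  case False
  then have "(\<Sum>a<k j. M $$ (p, off j + a)) = (\<Sum>a<k j. c (blk p) j)"
    using p blk_off_add_less[OF j] by (intro sum.cong) (simp_all add: M_index)
  with False show ?thesis
    by simp
qed

text \<open>Right multiplication by R adds up the columns of each block in the head column of the
  block; left multiplication by L, the inverse of R, subtracts the head row of each block from
  the other rows of the block.\<close>

definition R :: "'a mat" where
  "R = mat n n (\<lambda>(x, y). if head y then of_bool (blk x = blk y) else of_bool (x = y))"

definition L :: "'a mat" where
  "L = mat n n (\<lambda>(p, x). of_bool (p = x) - of_bool (\<not> head p \<and> x = off (blk p)))"

lemma R_carrier: "R \<in> carrier_mat n n"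
  by (simp add: R_def)

lemma L_carrier: "L \<in> carrier_mat n n"
  by (simp add: L_def)

lemma det_R: "det R = 1"
proof (rule det_unit_lower_triangular)
  show "R $$ (x, y) = 0" if "x < y" "y < n" for x y
    using that blk_of_bounds[of x k d] by (auto simp: R_def)
qed (simp_all add: R_def)

lemma det_L: "det L = 1"
proof (rule det_unit_lower_triangular)
  show "L $$ (p, x) = 0" if "p < x" "x < n" for p x
    using that blk_of_bounds[of p k d] by (auto simp: L_def)
qed (auto simp: L_def)

lemma M_R_index:
  assumes p: "p < n" and y: "y < n"
  shows "(M * R) $$ (p, y) = (if head y then
      (if blk p = blk y then s (blk y) else of_nat (k (blk y)) * c (blk p) (blk y))
    else M $$ (p, y))"
proof -
  have MR: "(M * R) $$ (p, y) = (\<Sum>x<n. M $$ (p, x) * R $$ (x, y))"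
    using p y by (simp add: R_def block_const_mat'_def scalar_prod_def atLeast0LessThan)
  show ?thesis
  proof (cases "head y")
    case True
    have "(\<Sum>x<n. M $$ (p, x) * R $$ (x, y)) = (\<Sum>x<n. if blk x = blk y then M $$ (p, x) else 0)"
      using y True by (intro sum.cong) (auto simp: R_def)
    also have "\<dots> = (\<Sum>a<k (blk y). M $$ (p, off (blk y) + a))"
      using blk_of_bounds[OF y] by (simp add: sum_over_block)
    finally show ?thesis
      using MR True M_block_row_sum[OF p blk_of_bounds(1)[OF y]] by simp
  next
    case False
    have "(\<Sum>x<n. M $$ (p, x) * R $$ (x, y)) = (\<Sum>x<n. if x = y then M $$ (p, y) else 0)"
      using y False by (intro sum.cong) (auto simp: R_def)
    with MR y False show ?thesis
      by simp
  qed
qed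

lemma L_mult_index:
  assumes X: "X \<in> carrier_mat n n" and p: "p < n" and y: "y < n"
  shows "(L * X) $$ (p, y) = (if head p then X $$ (p, y) else X $$ (p, y) - X $$ (off (blk p), y))"
proof -
  have off: "off (blk p) < n"
    using off_less blk_of_bounds[OF p] by simp
  have "(L * X) $$ (p, y) = (\<Sum>x<n. L $$ (p, x) * X $$ (x, y))"
    using X p y by (simp add: L_def scalar_prod_def atLeast0LessThan)
  also have "\<dots> = (\<Sum>x<n. (if x = p then X $$ (x, y) else 0) -
      (if \<not> head p \<and> x = off (blk p) then X $$ (x, y) else 0))"
    using p by (intro sum.cong) (auto simp: L_def)
  also have "\<dots> = (if head p then X $$ (p, y) else X $$ (p, y) - X $$ (off (blk p), y))"
    using p off by (cases "head p") (simp_all add: sum_subtractf)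
  finally show ?thesis .
qed

definition N :: "'a mat" where
  "N = L * (M * R)"

lemma N_carrier: "N \<in> carrier_mat n n"
  unfolding N_def by (rule mult_carrier_mat[OF L_carrier mult_carrier_mat[OF M_carrier R_carrier]])

lemma det_N: "det N = det M"
proof -
  have "det N = det L * (det M * det R)"
    unfolding N_def
    using det_mult[OF L_carrier mult_carrier_mat[OF M_carrier R_carrier]] det_mult[OF M_carrier R_carrier]
    by simp
  then show ?thesis
    by (simp add: det_L det_R)
qed

lemma N_index:
  "p < n \<Longrightarrow> y < n \<Longrightarrow>
    N $$ (p, y) = (if head p then (M * R) $$ (p, y) else (M * R) $$ (p, y) - (M * R) $$ (off (blk p), y))"
  using L_mult_index[OF mult_carrier_mat[OF M_carrier R_carrier]] by (simp add: N_def)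

definition tail :: "nat \<Rightarrow> nat set" where
  "tail i = {off i <..< off i + k i}"

lemma tail_blk: "p \<in> tail i \<Longrightarrow> blk p = i \<and> \<not> head p"
  using blk_of_eq[of k i p] by (auto simp: tail_def)

lemma tail_less: "i < d \<Longrightarrow> p \<in> tail i \<Longrightarrow> p < n"
  using blk_off_mono[of "Suc i" d k] by (auto simp: tail_def)

lemma not_head_in_tail: "p < n \<Longrightarrow> \<not> head p \<Longrightarrow> p \<in> tail (blk p)"
  using blk_of_bounds[of p k d] by (auto simp: tail_def)

lemma N_tail_row_zero:
  assumes i: "i < d" and p: "p \<in> tail i" and y: "y < n" "y \<notin> tail i"
  shows "N $$ (p, y) = 0"
proof -
  have p_blk: "blk p = i" "\<not> head p"
    using tail_blk[OF p] by auto
  have off_blk: "blk (off i) = i"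
    using blk_of_off_add[of 0 k i] k_pos[OF i] by simp
  have N_eq: "N $$ (p, y) = (M * R) $$ (p, y) - (M * R) $$ (off i, y)"
    using N_index[OF tail_less[OF i p] y(1)] p_blk by simp
  show ?thesis
  proof (cases "head y")
    case True
    with N_eq show ?thesis
      using M_R_index[OF tail_less[OF i p] y(1)] M_R_index[OF off_less[OF i] y(1)] p_blk off_blk
      by simp
  next
    case False
    then have "blk y \<noteq> i"
      using not_head_in_tail[OF y(1)] y(2) by auto
    with N_eq False show ?thesis
      using M_R_index[OF tail_less[OF i p] y(1)] M_R_index[OF off_less[OF i] y(1)] p_blk off_blk
        M_index[OF tail_less[OF i p] y(1)] M_index[OF off_less[OF i] y(1)]
      by simp
  qed
qed

lemma N_tail_index:
  assumes i: "i < d" and a: "a < k i - 1" and b: "b < k i - 1"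
  shows "N $$ (Suc (off i + a), Suc (off i + b)) = deflated_mat (B i) $$ (a, b)"
proof -
  have in_tail: "Suc (off i + a) \<in> tail i" "Suc (off i + b) \<in> tail i"
    using a b by (auto simp: tail_def)
  note less_n = tail_less[OF i in_tail(1)] tail_less[OF i in_tail(2)] off_less[OF i]
  have blks: "blk (Suc (off i + a)) = i" "blk (Suc (off i + b)) = i" "blk (off i) = i"
    using tail_blk[OF in_tail(1)] tail_blk[OF in_tail(2)] blk_of_off_add[of 0 k i] k_pos[OF i] by auto
  show ?thesis
    using N_index[OF less_n(1,2)] M_R_index[OF less_n(1,2)] M_R_index[OF less_n(3,2)]
      M_index[OF less_n(1,2)] M_index[OF less_n(3,2)] blks tail_blk[OF in_tail(2)] a b B_carrier[OF i]
    by (simp add: deflated_mat_def)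
qed

lemma N_head_index:
  assumes i: "i < d" and j: "j < d"
  shows "N $$ (off i, off j) = quotient_mat' d k s c $$ (i, j)"
  using N_index[OF off_less[OF i] off_less[OF j]] M_R_index[OF off_less[OF i] off_less[OF j]]
    head_off[OF i] head_off[OF j] blk_of_off_add[of 0 k i] blk_of_off_add[of 0 k j] k_pos[OF i] k_pos[OF j] i j
  by (auto simp: quotient_mat'_def mult.commute)

lemma det_restrict_tail:
  assumes i: "i < d"
  shows "det (restrict_rows (tail i) N) = det (deflated_mat (B i))"
proof -
  have "det (restrict_rows (tail i) N) =
      det (mat (k i - 1) (k i - 1) (\<lambda>(a, b). N $$ (Suc (off i + a), Suc (off i + b))))"
  proof (rule det_restrict_rows_principal_submatrix[OF N_carrier])
    show "Suc (off i + a) \<in> tail i" if "a < k i - 1" for a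
      using that by (auto simp: tail_def)
    then show "Suc (off i + a) < n" if "a < k i - 1" for a
      using tail_less[OF i] that by blast
    show "p \<in> (\<lambda>a. Suc (off i + a)) ` {..<k i - 1}" if "p \<in> tail i" for p
    proof
      show "p = Suc (off i + (p - Suc (off i)))" "p - Suc (off i) \<in> {..<k i - 1}"
        using that by (auto simp: tail_def)
    qed
  qed simp
  also have "mat (k i - 1) (k i - 1) (\<lambda>(a, b). N $$ (Suc (off i + a), Suc (off i + b))) = deflated_mat (B i)"
    using B_carrier[OF i] N_tail_index[OF i] by (intro eq_matI) (auto simp: deflated_mat_def)
  finally show ?thesis .
qed

lemma det_restrict_heads:
  "det (restrict_rows (- (\<Union>i<d. tail i)) N) = det (quotient_mat' d k s c)"
proof -
  have "det (restrict_rows (- (\<Union>i<d. tail i)) N) = det (mat d d (\<lambda>(i, j). N $$ (off i, off j)))"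
  proof (rule det_restrict_rows_principal_submatrix[OF N_carrier])
    show "off i < off j" if "i < j" "j < d" for i j
      using blk_off_add_le[OF that(1), of k] k_pos[of i] that by simp
    show "off i \<in> - (\<Union>j<d. tail j)" if "i < d" for i
      using tail_blk head_off[OF that] by blast
    show "p \<in> off ` {..<d}" if "p < n" "p \<in> - (\<Union>j<d. tail j)" for p
      using not_head_in_tail[OF that(1)] blk_of_bounds[OF that(1)] that(2) by (metis ComplD UN_I image_eqI lessThan_iff)
  qed (rule off_less)
  also have "mat d d (\<lambda>(i, j). N $$ (off i, off j)) = quotient_mat' d k s c"
    using N_head_index by (intro eq_matI) (auto simp: quotient_mat'_def)
  finally show ?thesis .
qed

theorem det_block_const_mat':
  "det M = det (quotient_mat' d k s c) * (\<Prod>i<d. det (deflated_mat (B i)))"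
proof -
  have "det M = (\<Prod>i<d. det (restrict_rows (tail i) N)) * det (restrict_rows (- (\<Union>i<d. tail i)) N)"
    unfolding det_N[symmetric]
    by (rule det_prod_invariant_rows[OF N_carrier N_tail_row_zero]) (auto dest: tail_blk)
  also have "(\<Prod>i<d. det (restrict_rows (tail i) N)) = (\<Prod>i<d. det (deflated_mat (B i)))"
    by (rule prod.cong) (simp_all add: det_restrict_tail)
  finally show ?thesis
    unfolding det_restrict_heads by (simp add: mult.commute)
qed

end

lemma det_eq_row_sum_mult_det_deflated:
  fixes B :: "'a::comm_ring_1 mat"
  assumes B: "B \<in> carrier_mat m m" and m: "0 < m"
    and row_sum: "\<And>p. p < m \<Longrightarrow> (\<Sum>q<m. B $$ (p, q)) = s"
  shows "det B = s * det (deflated_mat B)"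
proof -
  interpret single_block: row_regular_blocks 1 "\<lambda>_. m" "\<lambda>_. B" "\<lambda>_. s" "\<lambda>_ _. 0"
    using assms by unfold_locales auto
  have offsets: "blk_off (\<lambda>_. m) 0 = 0" "blk_off (\<lambda>_. m) 1 = m"
    by (simp_all add: blk_off_def)
  have "blk_of (\<lambda>_. m) p = 0" if "p < m" for p
    using blk_of_eq[of "\<lambda>_. m" 0 p] offsets that by simp
  then have "block_const_mat' 1 (\<lambda>_. m) (\<lambda>_. B) (\<lambda>_ _. 0) = B"
    using B offsets by (intro eq_matI) (auto simp: block_const_mat'_def Let_def)
  moreover have "det (quotient_mat' 1 (\<lambda>_. m) (\<lambda>_. s) (\<lambda>_ _. 0)) = s"
    by (subst det_single) (auto simp: quotient_mat'_def)
  ultimately show ?thesis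
    using single_block.det_block_const_mat' by simp
qed

section \<open>Characteristic polynomials\<close>

lemma char_poly_matrix_index:
  "A \<in> carrier_mat n n \<Longrightarrow> p < n \<Longrightarrow> q < n \<Longrightarrow>
    char_poly_matrix A $$ (p, q) = (if p = q then [:0, 1:] else 0) + [:- A $$ (p, q):]"
  by (simp add: char_poly_matrix_def)

lemma char_poly_matrix_row_sum:
  fixes A :: "'a::comm_ring_1 mat"
  assumes A: "A \<in> carrier_mat m m" and p: "p < m" and row_sum: "(\<Sum>q<m. A $$ (p, q)) = r"
  shows "(\<Sum>q<m. char_poly_matrix A $$ (p, q)) = [:- r, 1:]"
proof -
  have "(\<Sum>q<m. char_poly_matrix A $$ (p, q)) = (\<Sum>q<m. (if q = p then [:0, 1:] else 0) + [:- A $$ (p, q):])"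
    using A p by (intro sum.cong) (auto simp: char_poly_matrix_index)
  also have "\<dots> = [:0, 1:] + [:\<Sum>q<m. - A $$ (p, q):]"
    using p by (simp add: sum.distrib sum_to_poly)
  finally show ?thesis
    using row_sum by (simp add: sum_negf)
qed

lemma char_poly_row_regular:
  fixes A :: "'a::comm_ring_1 mat"
  assumes A: "A \<in> carrier_mat m m" and m: "0 < m"
    and row_sum: "\<And>p. p < m \<Longrightarrow> (\<Sum>q<m. A $$ (p, q)) = r"
  shows "char_poly A = [:- r, 1:] * det (deflated_mat (char_poly_matrix A))"
  unfolding char_poly_def
  using A m char_poly_matrix_row_sum[OF A _ row_sum]
  by (intro det_eq_row_sum_mult_det_deflated) auto

lemma char_poly_matrix_block_const_mat:
  assumes "\<And>i. i < d \<Longrightarrow> As i \<in> carrier_mat (k i) (k i)"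
  shows "char_poly_matrix (block_const_mat d k As a) =
    block_const_mat' d k (\<lambda>i. char_poly_matrix (As i)) (\<lambda>i j. [:- a i j:])"
proof (rule eq_matI)
  fix p q
  assume "p < dim_row (block_const_mat' d k (\<lambda>i. char_poly_matrix (As i)) (\<lambda>i j. [:- a i j:]))"
    "q < dim_col (block_const_mat' d k (\<lambda>i. char_poly_matrix (As i)) (\<lambda>i j. [:- a i j:]))"
  then have pq: "p < blk_off k d" "q < blk_off k d"
    by (simp_all add: block_const_mat'_def)
  have "block_const_mat d k As a \<in> carrier_mat (blk_off k d) (blk_off k d)"
    by (simp add: block_const_mat_def)
  note entry = char_poly_matrix_index[OF this pq]
  show "char_poly_matrix (block_const_mat d k As a) $$ (p, q) =
      block_const_mat' d k (\<lambda>i. char_poly_matrix (As i)) (\<lambda>i j. [:- a i j:]) $$ (p, q)"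
  proof (cases "blk_of k p = blk_of k q")
    case True
    define i where "i = blk_of k p"
    have i: "i < d" "blk_off k i \<le> p" "p < blk_off k i + k i" "blk_off k i \<le> q" "q < blk_off k i + k i"
      using blk_of_bounds[OF pq(1)] blk_of_bounds[OF pq(2)] True by (simp_all add: i_def)
    have "block_const_mat d k As a $$ (p, q) = As i $$ (p - blk_off k i, q - blk_off k i)"
      and "block_const_mat' d k (\<lambda>i. char_poly_matrix (As i)) (\<lambda>i j. [:- a i j:]) $$ (p, q) =
        char_poly_matrix (As i) $$ (p - blk_off k i, q - blk_off k i)"
      using pq True by (simp_all add: block_const_mat_def block_const_mat'_def Let_def i_def)
    moreover have "(p - blk_off k i = q - blk_off k i) = (p = q)"
      using i by auto
    ultimately show ?thesis
      using entry char_poly_matrix_index[OF assms[OF i(1)]] i by simp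
  next
    case False
    then have "p \<noteq> q" by auto
    with False show ?thesis
      using pq entry by (simp add: block_const_mat_def block_const_mat'_def Let_def)
  qed
qed (simp_all add: block_const_mat_def block_const_mat'_def char_poly_matrix_def)

lemma char_poly_matrix_quotient_mat:
  "char_poly_matrix (quotient_mat d k r a) = quotient_mat' d k (\<lambda>i. [:- r i, 1:]) (\<lambda>i j. [:- a i j:])"
  by (rule eq_matI) (auto simp: char_poly_matrix_def quotient_mat_def quotient_mat'_def of_nat_poly)

theorem char_poly_block_const_mat:
  assumes "\<And>i. i < d \<Longrightarrow> 0 < k i"
    and "\<And>i. i < d \<Longrightarrow> As i \<in> carrier_mat (k i) (k i)"
    and "\<And>i p. i < d \<Longrightarrow> p < k i \<Longrightarrow> (\<Sum>q<k i. As i $$ (p, q)) = r i"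
  shows "char_poly (block_const_mat d k As a) =
    char_poly (quotient_mat d k r a) * (\<Prod>i<d. det (deflated_mat (char_poly_matrix (As i))))"
proof -
  interpret row_regular_blocks d k "\<lambda>i. char_poly_matrix (As i)" "\<lambda>i. [:- r i, 1:]" "\<lambda>i j. [:- a i j:]"
  proof
    show "(\<Sum>q<k i. char_poly_matrix (As i) $$ (p, q)) = [:- r i, 1:]" if "i < d" "p < k i" for i p
      using char_poly_matrix_row_sum[OF assms(2) _ assms(3)] that by simp
  qed (simp_all add: assms(1,2))
  show ?thesis
    using det_block_const_mat'
    by (simp add: char_poly_def char_poly_matrix_block_const_mat[OF assms(2)] char_poly_matrix_quotient_mat)
qed

lemma row_regular_row_sum:
  "A \<in> carrier_mat m m \<Longrightarrow> row_regular A r \<Longrightarrow> p < m \<Longrightarrow> (\<Sum>q<m. A $$ (p, q)) = r"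
  by (simp add: row_regular_def)

lemma det_deflated_char_poly_matrix:
  fixes A :: "'a::idom mat" and lam :: "nat \<Rightarrow> 'a"
  assumes A: "A \<in> carrier_mat m m" and m: "0 < m"
    and row_sum: "\<And>p. p < m \<Longrightarrow> (\<Sum>q<m. A $$ (p, q)) = lam 0"
    and char_poly: "char_poly A = (\<Prod>j<m. [:- lam j, 1:])"
  shows "det (deflated_mat (char_poly_matrix A)) = (\<Prod>j\<in>{1..<m}. [:- lam j, 1:])"
proof -
  have "[:- lam 0, 1:] * det (deflated_mat (char_poly_matrix A)) = char_poly A"
    using char_poly_row_regular[OF A m row_sum] by simp
  also have "\<dots> = [:- lam 0, 1:] * (\<Prod>j\<in>{1..<m}. [:- lam j, 1:])"
  proof -
    have "{..<m} = insert 0 {1..<m}"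
      using m by auto
    then show ?thesis
      using char_poly by simp
  qed
  finally show ?thesis
    by (rule mult_left_cancel[THEN iffD1, rotated]) simp
qed

theorem mainTheorem4:
  fixes d :: nat and k :: "nat \<Rightarrow> nat" and As :: "nat \<Rightarrow> complex mat"
    and a :: "nat \<Rightarrow> nat \<Rightarrow> complex" and r :: "nat \<Rightarrow> complex"
    and lam :: "nat \<Rightarrow> nat \<Rightarrow> complex"
  assumes "d > 0"
    and "\<forall>i < d. k i > 0"
    and "\<forall>i < d. As i \<in> carrier_mat (k i) (k i)"
    and "\<forall>i < d. normal_mat (As i)"
    and "\<forall>i < d. row_regular (As i) (r i)"
    and "\<forall>i < d. char_poly (As i) = (\<Prod>j < k i. [:- lam i j, 1:]) \<and> lam i 0 = r i"
  shows "char_poly (block_const_mat d k As a) =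
         char_poly (quotient_mat d k r a) * (\<Prod>i < d. \<Prod>j \<in> {1..<k i}. [:- lam i j, 1:])"
proof -
  have row_sum: "(\<Sum>q<k i. As i $$ (p, q)) = r i" if "i < d" "p < k i" for i p
    using assms(3,5) that row_regular_row_sum by blast
  have "char_poly (block_const_mat d k As a) =
      char_poly (quotient_mat d k r a) * (\<Prod>i<d. det (deflated_mat (char_poly_matrix (As i))))"
    using assms(2,3) row_sum by (intro char_poly_block_const_mat) auto
  also have "(\<Prod>i<d. det (deflated_mat (char_poly_matrix (As i)))) =
      (\<Prod>i<d. \<Prod>j\<in>{1..<k i}. [:- lam i j, 1:])"
  proof (rule prod.cong)
    show "det (deflated_mat (char_poly_matrix (As i))) = (\<Prod>j\<in>{1..<k i}. [:- lam i j, 1:])"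
      if "i \<in> {..<d}" for i
      using that assms(2,3,6) row_sum by (intro det_deflated_char_poly_matrix) auto
  qed simp
  finally show ?thesis .
qed

end
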